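(* Let $p$ be prime, $\mathbb{F}=\mathbb{F}_p$, $1\le k\le n\le N$, $y_1,\dots,y_k\in\mathbb{F}^N$, $0\le m\le n-k$ and $1\le j_1<\dots<j_m\le N$. Let $a$ be the coefficient of the monomial $x_{j_1}\cdots x_{j_m}$ in the (multilinear) polynomial $(S_n)_{y_1\dots y_k}(x)$, where $S_n(x)=\sum_{T\subseteq[N],|T|=n}\prod_{i\in T}x_i$. Then, with $T=\{j_1,\dots,j_m\}$: (1) $a=\sum_{\ell_1,\dots,\ell_k\ge1,\ \sum_i\ell_i=n-m}\mathcal{H}^{T}\big(y_1^{(\ell_1)},\dots,y_k^{(\ell_k)}\big)$; (2) if $k+m+p>n+1$, then $a=\sum_{\ell_1,\dots,\ell_k\ge1,\ \sum_i\ell_i=n-m}\Big(\prod_{i=1}^k\ell_i!\Big)^{-1}\mathcal{S}^{T}\big(y_1^{(\ell_1)},\dots,y_k^{(\ell_k)}\big)$, the inverse taken in $\mathbb{F}_p$.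
   Context: Directional derivatives: $f_y(x)=f(x+y)-f(x)$, iterated. For vectors $r_1,\dots,r_k\in\mathbb{F}^N$, integers $\ell_t\ge0$ with $\sum\ell_t=L$, and $T\subseteq[N]$, let $[N]\setminus T=\{c_1<c_2<\dots\}$ and define $\mathcal{H}^T(r_1^{(\ell_1)},\dots,r_k^{(\ell_k)})=\sum_{j_1<\dots<j_L,\ j_i\in[N]\setminus T}\sum_{(\theta_1,\dots,\theta_k)}\prod_t\prod_{i\in\theta_t}r_t(j_i)$, where $(\theta_t)$ ranges over ordered partitions of $[L]$ with $|\theta_t|=\ell_t$; and $\mathcal{S}^T(r_1^{(\ell_1)},\dots,r_k^{(\ell_k)})=\sum_{\rho}\prod_{i=1}^L w_i(\rho(i))$, where $\rho$ ranges over injective maps $[L]\to[N]\setminus T$ and $(w_1,\dots,w_L)$ is the list consisting of $r_1$ repeated $\ell_1$ times, then $r_2$ repeated $\ell_2$ times, etc. ($\mathcal{S}^T$ is the sum of all permanents of $L\times L$ submatrices of the matrix with rows $w_i$ restricted to columns outside $T$.) Here $r(j)$ is the $j$-th coordinate. *)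

theory Defs
  imports Main "HOL-Library.FuncSet" "Berlekamp_Zassenhaus.Finite_Field"
begin

text \<open>Vectors in F^N are functions nat => F, only coordinates 1..N being relevant.
  Polynomial functions in x_1..x_N are functions (nat => F) => F.\<close>

definition dir_deriv :: "((nat \<Rightarrow> 'a::ab_group_add) \<Rightarrow> 'a) \<Rightarrow> (nat \<Rightarrow> 'a) \<Rightarrow> ((nat \<Rightarrow> 'a) \<Rightarrow> 'a)" where
  "dir_deriv f y = (\<lambda>x. f (\<lambda>i. x i + y i) - f x)"

definition iter_deriv :: "((nat \<Rightarrow> 'a::ab_group_add) \<Rightarrow> 'a) \<Rightarrow> (nat \<Rightarrow> 'a) list \<Rightarrow> ((nat \<Rightarrow> 'a) \<Rightarrow> 'a)" where
  "iter_deriv f ys = foldl dir_deriv f ys"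

definition elem_sym :: "nat \<Rightarrow> nat \<Rightarrow> (nat \<Rightarrow> 'a::comm_ring_1) \<Rightarrow> 'a" where
  "elem_sym N n x = (\<Sum>S\<in>{S. S \<subseteq> {1..N} \<and> card S = n}. \<Prod>i\<in>S. x i)"

definition multilin_coeffs :: "nat \<Rightarrow> ((nat \<Rightarrow> 'a::comm_ring_1) \<Rightarrow> 'a) \<Rightarrow> (nat set \<Rightarrow> 'a)" where
  "multilin_coeffs N f = (THE c. (\<forall>A. \<not> A \<subseteq> {1..N} \<longrightarrow> c A = 0) \<and>
      (\<forall>x. f x = (\<Sum>A\<in>Pow {1..N}. c A * (\<Prod>i\<in>A. x i))))"

definition multilin_coeff :: "nat \<Rightarrow> ((nat \<Rightarrow> 'a::comm_ring_1) \<Rightarrow> 'a) \<Rightarrow> nat set \<Rightarrow> 'a" where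
  "multilin_coeff N f A = multilin_coeffs N f A"

text \<open>Increasing tuples j_1<...<j_L in [N]-T are strictly monotone j on {1..L};
  ordered partitions (theta_1..theta_k) of [L] with |theta_t| = l_t.\<close>
definition H_sum :: "nat \<Rightarrow> nat set \<Rightarrow> nat \<Rightarrow> (nat \<Rightarrow> nat \<Rightarrow> 'a::comm_ring_1) \<Rightarrow> (nat \<Rightarrow> nat) \<Rightarrow> 'a" where
  "H_sum N T k r l = (let L = (\<Sum>t=1..k. l t) in
     \<Sum>j\<in>{j \<in> {1..L} \<rightarrow>\<^sub>E ({1..N} - T). strict_mono_on {1..L} j}.
       \<Sum>\<theta>\<in>{\<theta> \<in> {1..k} \<rightarrow>\<^sub>E Pow {1..L}.
               (\<Union>t\<in>{1..k}. \<theta> t) = {1..L} \<and>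
               (\<forall>t\<in>{1..k}. \<forall>s\<in>{1..k}. t \<noteq> s \<longrightarrow> \<theta> t \<inter> \<theta> s = {}) \<and>
               (\<forall>t\<in>{1..k}. card (\<theta> t) = l t)}.
         \<Prod>t\<in>{1..k}. \<Prod>i\<in>\<theta> t. r t (j i))"

text \<open>Block index: row i (1 <= i <= L) of the list w belongs to the t-th block,
  i.e. w_i = r_t where l_1+...+l_(t-1) < i <= l_1+...+l_t.\<close>
definition block_of :: "(nat \<Rightarrow> nat) \<Rightarrow> nat \<Rightarrow> nat" where
  "block_of l i = (LEAST t. i \<le> (\<Sum>s=1..t. l s))"

definition S_sum :: "nat \<Rightarrow> nat set \<Rightarrow> nat \<Rightarrow> (nat \<Rightarrow> nat \<Rightarrow> 'a::comm_ring_1) \<Rightarrow> (nat \<Rightarrow> nat) \<Rightarrow> 'a" where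
  "S_sum N T k r l = (let L = (\<Sum>t=1..k. l t) in
     \<Sum>\<rho>\<in>{\<rho> \<in> {1..L} \<rightarrow>\<^sub>E ({1..N} - T). inj_on \<rho> {1..L}}.
       \<Prod>i\<in>{1..L}. r (block_of l i) (\<rho> i))"

definition compositions :: "nat \<Rightarrow> nat \<Rightarrow> (nat \<Rightarrow> nat) set" where
  "compositions k M = {l \<in> {1..k} \<rightarrow>\<^sub>E {1..M}. (\<Sum>t=1..k. l t) = M}"

end

theory Submission
  imports Defs "HOL-Library.Disjoint_Sets"
begin

text \<open>Differentiating the monomial x_A in direction y replaces the variables in some nonempty
  B \<subseteq> A by the entries of y. Hence the coefficient of x_T in (S_n)_{y_1 ... y_k} is the sum of
  prod_t prod_{u in B_t} y_t(u) over all families (B_1, ..., B_k) of pairwise disjoint nonempty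
  subsets of [N] - T with |T| + sum_t |B_t| = n. Grouping the families by their sizes l_t = |B_t|
  leaves sums over disjoint families of prescribed sizes. Such a family is the same as an
  increasing enumeration j of its union together with an ordered partition of the index set, which
  gives the sum H^T; and it is the family of block images of exactly prod_t l_t! injections rho in
  the sum S^T, a number that is invertible in F_p as soon as every l_t is smaller than p.\<close>

section \<open>Multilinear coefficients\<close>

lemma multilin_expansion_zero_coeff:
  fixes c :: "nat set \<Rightarrow> 'a::comm_ring_1"
  assumes zero: "\<And>x. (\<Sum>A\<in>Pow {1..N}. c A * (\<Prod>i\<in>A. x i)) = 0"
  shows "B \<subseteq> {1..N} \<Longrightarrow> c B = 0"
proof (induction "card B" arbitrary: B rule: less_induct)
  case (less B)
  have fin: "finite B" using less.prems finite_subset by blast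
  \<comment> \<open>Evaluate at the indicator vector of B: only the subsets of B survive.\<close>
  define x :: "nat \<Rightarrow> 'a" where "x = (\<lambda>i. if i \<in> B then 1 else 0)"
  have prod_x: "(\<Prod>i\<in>A. x i) = (if A \<subseteq> B then 1 else 0)" if "finite A" for A
    using that unfolding x_def by (induction A rule: finite_induct) auto
  have "0 = (\<Sum>A\<in>Pow {1..N}. c A * (\<Prod>i\<in>A. x i))"
    by (rule zero[symmetric])
  also have "\<dots> = (\<Sum>A\<in>Pow {1..N}. if A \<subseteq> B then c A else 0)"
    by (rule sum.cong) (auto simp: prod_x finite_subset)
  also have "\<dots> = (\<Sum>A\<in>{A\<in>Pow {1..N}. A \<subseteq> B}. c A)"
    by (subst sum.inter_filter) auto
  also have "{A\<in>Pow {1..N}. A \<subseteq> B} = insert B (Pow B - {B})"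
    using less.prems by auto
  also have "(\<Sum>A\<in>insert B (Pow B - {B}). c A) = c B + (\<Sum>A\<in>Pow B - {B}. c A)"
    using fin by (subst sum.insert) auto
  also have "(\<Sum>A\<in>Pow B - {B}. c A) = 0"
  proof (rule sum.neutral, rule ballI)
    fix A assume A: "A \<in> Pow B - {B}"
    then have "card A < card B" using fin by (simp add: psubset_card_mono psubsetI)
    then show "c A = 0" using A less by blast
  qed
  finally show ?case by simp
qed

lemma multilin_coeffs_eqI:
  fixes c :: "nat set \<Rightarrow> 'a::comm_ring_1"
  assumes supp: "\<And>A. \<not> A \<subseteq> {1..N} \<Longrightarrow> c A = 0"
    and expansion: "\<And>x. f x = (\<Sum>A\<in>Pow {1..N}. c A * (\<Prod>i\<in>A. x i))"
  shows "multilin_coeffs N f = c"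
  unfolding multilin_coeffs_def
proof (rule the_equality)
  fix c' :: "nat set \<Rightarrow> 'a"
  assume c': "(\<forall>A. \<not> A \<subseteq> {1..N} \<longrightarrow> c' A = 0) \<and> (\<forall>x. f x = (\<Sum>A\<in>Pow {1..N}. c' A * (\<Prod>i\<in>A. x i)))"
  have diff_zero: "(\<Sum>A\<in>Pow {1..N}. (c' A - c A) * (\<Prod>i\<in>A. x i)) = 0" for x
    using c' expansion[of x] by (simp add: left_diff_distrib sum_subtractf)
  show "c' = c"
  proof
    fix A
    show "c' A = c A"
    proof (cases "A \<subseteq> {1..N}")
      case True
      then show ?thesis
        using multilin_expansion_zero_coeff[where c="\<lambda>A. c' A - c A", OF diff_zero] by simp
    qed (simp add: c' supp)
  qed
qed (simp add: supp expansion)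

lemma dir_deriv_multilin_expansion:
  fixes c :: "nat set \<Rightarrow> 'a::comm_ring_1"
  assumes expansion: "\<And>x. f x = (\<Sum>A\<in>Pow {1..N}. c A * (\<Prod>i\<in>A. x i))"
  shows "dir_deriv f y x = (\<Sum>A\<in>Pow {1..N}.
           (\<Sum>B\<in>Pow ({1..N} - A) - {{}}. c (A \<union> B) * (\<Prod>i\<in>B. y i)) * (\<Prod>i\<in>A. x i))"
proof -
  have shifted: "f (\<lambda>i. x i + y i)
      = (\<Sum>C\<in>Pow {1..N}. \<Sum>D\<in>Pow C. c C * ((\<Prod>i\<in>D. x i) * (\<Prod>i\<in>C - D. y i)))"
    unfolding expansion by (rule sum.cong) (auto simp: prod_add finite_subset sum_distrib_left)
  have split_top: "(\<Sum>D\<in>Pow C. c C * ((\<Prod>i\<in>D. x i) * (\<Prod>i\<in>C - D. y i)))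
       = c C * (\<Prod>i\<in>C. x i) + (\<Sum>D\<in>Pow C - {C}. c C * ((\<Prod>i\<in>D. x i) * (\<Prod>i\<in>C - D. y i)))"
    if "C \<in> Pow {1..N}" for C
    using that by (subst sum.remove[of _ C]) (auto simp: finite_subset)
  have "dir_deriv f y x
      = (\<Sum>(C, D)\<in>(SIGMA C:Pow {1..N}. Pow C - {C}). c C * ((\<Prod>i\<in>D. x i) * (\<Prod>i\<in>C - D. y i)))"
    unfolding dir_deriv_def shifted using split_top
    by (simp add: expansion sum.distrib sum.Sigma finite_subset)
  also have "\<dots> = (\<Sum>(A, B)\<in>(SIGMA A:Pow {1..N}. Pow ({1..N} - A) - {{}}).
                      c (A \<union> B) * (\<Prod>i\<in>B. y i) * (\<Prod>i\<in>A. x i))"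
    by (rule sum.reindex_bij_witness[where i="\<lambda>(A, B). (A \<union> B, A)" and j="\<lambda>(C, D). (D, C - D)"])
       (auto simp: Un_absorb1 Diff_partition)
  finally show ?thesis
    by (simp add: sum.Sigma finite_subset sum_distrib_right split_def)
qed

section \<open>Iterated derivatives of multilinear polynomials\<close>

definition nonempty_disjoint_families :: "nat \<Rightarrow> nat \<Rightarrow> nat set \<Rightarrow> (nat \<Rightarrow> nat set) set" where
  "nonempty_disjoint_families N k A = {\<beta> \<in> {1..k} \<rightarrow>\<^sub>E Pow ({1..N} - A).
      (\<forall>t\<in>{1..k}. \<beta> t \<noteq> {}) \<and> disjoint_family_on \<beta> {1..k}}"

definition family_monomial :: "nat \<Rightarrow> (nat \<Rightarrow> nat \<Rightarrow> 'a::comm_ring_1) \<Rightarrow> (nat \<Rightarrow> nat set) \<Rightarrow> 'a" where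
  "family_monomial k y \<beta> = (\<Prod>t\<in>{1..k}. \<Prod>u\<in>\<beta> t. y t u)"

lemma finite_nonempty_disjoint_families: "finite (nonempty_disjoint_families N k A)"
  unfolding nonempty_disjoint_families_def
  by (rule finite_subset[OF _ finite_PiE[of "{1..k}" "\<lambda>_. Pow ({1..N} - A)"]]) auto

lemma nonempty_disjoint_families_0: "nonempty_disjoint_families N 0 A = {\<lambda>_. undefined}"
  by (auto simp: nonempty_disjoint_families_def disjoint_family_on_def)

lemma nonempty_disjoint_families_SucI:
  assumes \<beta>: "\<beta> \<in> nonempty_disjoint_families N k (A \<union> B)" and B: "B \<subseteq> {1..N} - A" "B \<noteq> {}"
  shows "\<beta>(Suc k := B) \<in> nonempty_disjoint_families N (Suc k) A"
proof -
  have "disjoint_family_on (\<beta>(Suc k := B)) (insert (Suc k) {1..k})"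
    using \<beta> by (auto simp: nonempty_disjoint_families_def disjoint_family_on_def)
  then show ?thesis
    using assms by (auto simp: nonempty_disjoint_families_def PiE_def Pi_def extensional_def
        atLeastAtMostSuc_conv)
qed

lemma nonempty_disjoint_families_SucD:
  assumes "\<beta> \<in> nonempty_disjoint_families N (Suc k) A"
  shows "\<beta> (Suc k) \<in> Pow ({1..N} - A) - {{}}"
    and "\<beta>(Suc k := undefined) \<in> nonempty_disjoint_families N k (A \<union> \<beta> (Suc k))"
proof -
  have disjoint: "disjoint_family_on \<beta> {1..Suc k}"
    using assms by (simp add: nonempty_disjoint_families_def)
  have last_disjoint: "u \<notin> \<beta> (Suc k)" if "t \<in> {1..k}" "u \<in> \<beta> t" for t u
    using disjoint_family_onD[OF disjoint, of t "Suc k"] that by auto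
  show "\<beta>(Suc k := undefined) \<in> nonempty_disjoint_families N k (A \<union> \<beta> (Suc k))"
    using assms last_disjoint by (auto simp: nonempty_disjoint_families_def disjoint_family_on_def
        PiE_def Pi_def extensional_def)
qed (use assms in \<open>auto simp: nonempty_disjoint_families_def\<close>)

lemma bij_betw_nonempty_disjoint_families_Suc:
  "bij_betw (\<lambda>\<beta>. (\<beta> (Suc k), \<beta>(Suc k := undefined))) (nonempty_disjoint_families N (Suc k) A)
     (SIGMA B:Pow ({1..N} - A) - {{}}. nonempty_disjoint_families N k (A \<union> B))"
proof (rule bij_betwI[where g="\<lambda>(B, \<beta>). \<beta>(Suc k := B)"])
  show "(\<lambda>\<beta>. (\<beta> (Suc k), \<beta>(Suc k := undefined))) \<in> nonempty_disjoint_families N (Suc k) A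
      \<rightarrow> (SIGMA B:Pow ({1..N} - A) - {{}}. nonempty_disjoint_families N k (A \<union> B))"
    using nonempty_disjoint_families_SucD by blast
  show "(\<lambda>(B, \<beta>). \<beta>(Suc k := B)) \<in> (SIGMA B:Pow ({1..N} - A) - {{}}. nonempty_disjoint_families N k (A \<union> B))
      \<rightarrow> nonempty_disjoint_families N (Suc k) A"
  proof
    fix p assume "p \<in> (SIGMA B:Pow ({1..N} - A) - {{}}. nonempty_disjoint_families N k (A \<union> B))"
    then obtain B \<beta> where "p = (B, \<beta>)" "B \<subseteq> {1..N} - A" "B \<noteq> {}"
      "\<beta> \<in> nonempty_disjoint_families N k (A \<union> B)"
      by blast
    then show "(\<lambda>(B, \<beta>). \<beta>(Suc k := B)) p \<in> nonempty_disjoint_families N (Suc k) A"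
      using nonempty_disjoint_families_SucI by simp
  qed
  fix p assume "p \<in> (SIGMA B:Pow ({1..N} - A) - {{}}. nonempty_disjoint_families N k (A \<union> B))"
  then show "(\<lambda>\<beta>. (\<beta> (Suc k), \<beta>(Suc k := undefined))) ((\<lambda>(B, \<beta>). \<beta>(Suc k := B)) p) = p"
    by (auto simp: nonempty_disjoint_families_def PiE_def extensional_def fun_upd_idem_iff)
qed simp

lemma family_monomial_Suc:
  "family_monomial (Suc k) y \<beta>
     = family_monomial k y (\<beta>(Suc k := X)) * (\<Prod>u\<in>\<beta> (Suc k). y (Suc k) u)"
proof -
  have "family_monomial k y (\<beta>(Suc k := X)) = family_monomial k y \<beta>"
    unfolding family_monomial_def by (rule prod.cong) auto
  then show ?thesis
    by (simp add: family_monomial_def)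
qed

lemma sum_nonempty_disjoint_families_Suc:
  "(\<Sum>\<beta>\<in>nonempty_disjoint_families N (Suc k) A.
       c (A \<union> (\<Union>t\<in>{1..Suc k}. \<beta> t)) * family_monomial (Suc k) y \<beta>)
   = (\<Sum>B\<in>Pow ({1..N} - A) - {{}}.
       (\<Sum>\<beta>\<in>nonempty_disjoint_families N k (A \<union> B).
          c (A \<union> B \<union> (\<Union>t\<in>{1..k}. \<beta> t)) * family_monomial k y \<beta>) * (\<Prod>u\<in>B. y (Suc k) u))"
proof -
  have "(\<Sum>\<beta>\<in>nonempty_disjoint_families N (Suc k) A.
          c (A \<union> (\<Union>t\<in>{1..Suc k}. \<beta> t)) * family_monomial (Suc k) y \<beta>)
      = (\<Sum>(B, \<beta>)\<in>(SIGMA B:Pow ({1..N} - A) - {{}}. nonempty_disjoint_families N k (A \<union> B)).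
          c (A \<union> B \<union> (\<Union>t\<in>{1..k}. \<beta> t)) * (family_monomial k y \<beta> * (\<Prod>u\<in>B. y (Suc k) u)))"
    by (subst sum.reindex_bij_betw[OF bij_betw_nonempty_disjoint_families_Suc, symmetric])
       (simp add: atLeastAtMostSuc_conv family_monomial_Suc[where X=undefined] Un_assoc)
  then show ?thesis
    by (simp add: sum.Sigma finite_nonempty_disjoint_families sum_distrib_right mult.assoc split_def)
qed

lemma iter_deriv_multilin_expansion:
  fixes c :: "nat set \<Rightarrow> 'a::comm_ring_1"
  assumes expansion: "\<And>x. f x = (\<Sum>A\<in>Pow {1..N}. c A * (\<Prod>i\<in>A. x i))"
  shows "iter_deriv f (map y [1..<k+1]) x = (\<Sum>A\<in>Pow {1..N}.
           (\<Sum>\<beta>\<in>nonempty_disjoint_families N k A.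
              c (A \<union> (\<Union>t\<in>{1..k}. \<beta> t)) * family_monomial k y \<beta>) * (\<Prod>i\<in>A. x i))"
proof (induction k arbitrary: x)
  case 0
  then show ?case
    by (simp add: iter_deriv_def nonempty_disjoint_families_0 family_monomial_def expansion)
next
  case (Suc k)
  have "iter_deriv f (map y [1..<Suc k + 1]) x = dir_deriv (iter_deriv f (map y [1..<k+1])) (y (Suc k)) x"
    by (simp add: iter_deriv_def)
  then show ?case
    unfolding dir_deriv_multilin_expansion[OF Suc.IH] sum_nonempty_disjoint_families_Suc
    by (simp add: Un_assoc)
qed

lemma elem_sym_multilin_expansion:
  "elem_sym N n x = (\<Sum>A\<in>Pow {1..N}. of_bool (card A = n) * (\<Prod>i\<in>A. x i))"
proof -
  have "(\<Sum>A\<in>Pow {1..N}. of_bool (card A = n) * (\<Prod>i\<in>A. x i))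
      = (\<Sum>A\<in>Pow {1..N} \<inter> {A. card A = n}. \<Prod>i\<in>A. x i)"
    by simp
  also have "Pow {1..N} \<inter> {A. card A = n} = {S. S \<subseteq> {1..N} \<and> card S = n}"
    by auto
  finally show ?thesis
    unfolding elem_sym_def by simp
qed

lemma multilin_coeff_iter_deriv_elem_sym:
  fixes y :: "nat \<Rightarrow> nat \<Rightarrow> 'a::comm_ring_1"
  assumes "T \<subseteq> {1..N}"
  shows "multilin_coeff N (iter_deriv (elem_sym N n) (map y [1..<k+1])) T
     = (\<Sum>\<beta>\<in>{\<beta>\<in>nonempty_disjoint_families N k T. card (T \<union> (\<Union>t\<in>{1..k}. \<beta> t)) = n}.
          family_monomial k y \<beta>)"
proof -
  define c where "c A = (if A \<subseteq> {1..N} then \<Sum>\<beta>\<in>nonempty_disjoint_families N k A.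
      of_bool (card (A \<union> (\<Union>t\<in>{1..k}. \<beta> t)) = n) * family_monomial k y \<beta> else 0)" for A
  have "multilin_coeffs N (iter_deriv (elem_sym N n) (map y [1..<k+1])) = c"
  proof (rule multilin_coeffs_eqI)
    show "c A = 0" if "\<not> A \<subseteq> {1..N}" for A
      using that by (simp add: c_def)
    show "iter_deriv (elem_sym N n) (map y [1..<k+1]) x = (\<Sum>A\<in>Pow {1..N}. c A * (\<Prod>i\<in>A. x i))" for x
      unfolding iter_deriv_multilin_expansion[OF elem_sym_multilin_expansion]
      by (rule sum.cong) (auto simp: c_def)
  qed
  then have "multilin_coeff N (iter_deriv (elem_sym N n) (map y [1..<k+1])) T = c T"
    unfolding multilin_coeff_def by (rule fun_cong)
  also have "c T = (\<Sum>\<beta>\<in>{\<beta>\<in>nonempty_disjoint_families N k T.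
                      card (T \<union> (\<Union>t\<in>{1..k}. \<beta> t)) = n}. family_monomial k y \<beta>)"
    using assms by (simp add: c_def finite_nonempty_disjoint_families Collect_conj_eq)
  finally show ?thesis .
qed

section \<open>Grouping by sizes\<close>

definition disjoint_families_of_sizes :: "nat \<Rightarrow> nat set \<Rightarrow> nat \<Rightarrow> (nat \<Rightarrow> nat) \<Rightarrow> (nat \<Rightarrow> nat set) set" where
  "disjoint_families_of_sizes N T k l = {\<beta> \<in> {1..k} \<rightarrow>\<^sub>E Pow ({1..N} - T).
      disjoint_family_on \<beta> {1..k} \<and> (\<forall>t\<in>{1..k}. card (\<beta> t) = l t)}"

lemma finite_disjoint_families_of_sizes: "finite (disjoint_families_of_sizes N T k l)"
  unfolding disjoint_families_of_sizes_def
  by (rule finite_subset[OF _ finite_PiE[of "{1..k}" "\<lambda>_. Pow ({1..N} - T)"]]) auto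

lemma finite_compositions: "finite (compositions k M)"
  unfolding compositions_def by (rule finite_subset[OF _ finite_PiE[of "{1..k}" "\<lambda>_. {1..M}"]]) auto

lemma finite_family_member:
  fixes N :: nat
  assumes "\<beta> \<in> I \<rightarrow>\<^sub>E Pow ({1..N} - T)" "t \<in> I"
  shows "finite (\<beta> t)"
proof -
  have "\<beta> t \<subseteq> {1..N}"
    using PiE_mem[OF assms] by blast
  then show ?thesis
    by (rule finite_subset) simp
qed

lemma card_Un_UN_disjoint_family:
  fixes k N :: nat
  assumes "finite T" and \<beta>: "\<beta> \<in> {1..k} \<rightarrow>\<^sub>E Pow ({1..N} - T)" "disjoint_family_on \<beta> {1..k}"
  shows "card (T \<union> (\<Union>t\<in>{1..k}. \<beta> t)) = card T + (\<Sum>t=1..k. card (\<beta> t))"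
proof -
  have fin: "finite (\<beta> t)" if "t \<in> {1..k}" for t
    using finite_family_member[OF \<beta>(1) that] .
  have "card (\<Union>t\<in>{1..k}. \<beta> t) = (\<Sum>t=1..k. card (\<beta> t))"
    using card_UN_disjoint'[OF \<beta>(2) fin] by simp
  moreover have "T \<inter> (\<Union>t\<in>{1..k}. \<beta> t) = {}"
    using \<beta>(1) by auto
  ultimately show ?thesis
    using assms(1) fin by (simp add: card_Un_disjoint)
qed

lemma sizes_in_compositions:
  assumes T: "finite T" "card T = m" and \<beta>: "\<beta> \<in> nonempty_disjoint_families N k T"
    and card: "card (T \<union> (\<Union>t\<in>{1..k}. \<beta> t)) = n"
  shows "restrict (\<lambda>t. card (\<beta> t)) {1..k} \<in> compositions k (n - m)"
proof -
  have \<beta>': "\<beta> \<in> {1..k} \<rightarrow>\<^sub>E Pow ({1..N} - T)" "disjoint_family_on \<beta> {1..k}"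
    "\<forall>t\<in>{1..k}. \<beta> t \<noteq> {}"
    using \<beta> by (simp_all add: nonempty_disjoint_families_def)
  have total: "(\<Sum>t=1..k. card (\<beta> t)) = n - m"
    using card_Un_UN_disjoint_family[OF T(1) \<beta>'(1,2)] card T(2) by simp
  have "card (\<beta> t) \<in> {1..n - m}" if t: "t \<in> {1..k}" for t
  proof -
    have "0 < card (\<beta> t)"
      using \<beta>'(3) finite_family_member[OF \<beta>'(1) t] t by (simp add: card_gt_0_iff)
    moreover have "card (\<beta> t) \<le> (\<Sum>t=1..k. card (\<beta> t))"
      by (rule member_le_sum) (use t in simp_all)
    ultimately show ?thesis
      using total by simp
  qed
  then show ?thesis
    using total by (simp add: compositions_def)
qed

lemma nonempty_disjoint_families_with_sizes:
  assumes T: "finite T" "card T = m" "m \<le> n" and l: "l \<in> compositions k (n - m)"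
  shows "{\<beta> \<in> {\<beta>\<in>nonempty_disjoint_families N k T. card (T \<union> (\<Union>t\<in>{1..k}. \<beta> t)) = n}.
            restrict (\<lambda>t. card (\<beta> t)) {1..k} = l}
       = disjoint_families_of_sizes N T k l"
proof (intro equalityI subsetI)
  have l_ext: "l \<in> extensional {1..k}" and l_pos: "\<And>t. t \<in> {1..k} \<Longrightarrow> 1 \<le> l t"
    and l_sum: "(\<Sum>t=1..k. l t) = n - m"
    using l by (auto simp: compositions_def PiE_iff)
  have sizes_eq: "restrict (\<lambda>t. card (\<beta> t)) {1..k} = l \<longleftrightarrow> (\<forall>t\<in>{1..k}. card (\<beta> t) = l t)" for \<beta>
    using l_ext by (auto simp: extensional_def fun_eq_iff)
  fix \<beta>
  show "\<beta> \<in> disjoint_families_of_sizes N T k l"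
    if "\<beta> \<in> {\<beta> \<in> {\<beta>\<in>nonempty_disjoint_families N k T. card (T \<union> (\<Union>t\<in>{1..k}. \<beta> t)) = n}.
            restrict (\<lambda>t. card (\<beta> t)) {1..k} = l}"
    using that sizes_eq[of \<beta>] by (simp add: nonempty_disjoint_families_def disjoint_families_of_sizes_def)
  assume "\<beta> \<in> disjoint_families_of_sizes N T k l"
  then have \<beta>: "\<beta> \<in> {1..k} \<rightarrow>\<^sub>E Pow ({1..N} - T)" "disjoint_family_on \<beta> {1..k}"
    "\<forall>t\<in>{1..k}. card (\<beta> t) = l t"
    by (simp_all add: disjoint_families_of_sizes_def)
  have "\<beta> t \<noteq> {}" if "t \<in> {1..k}" for t
    using \<beta>(3) l_pos[OF that] that by fastforce
  moreover have "card (T \<union> (\<Union>t\<in>{1..k}. \<beta> t)) = n"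
    using card_Un_UN_disjoint_family[OF T(1) \<beta>(1,2)] \<beta>(3) l_sum T(2,3) by simp
  ultimately show "\<beta> \<in> {\<beta> \<in> {\<beta>\<in>nonempty_disjoint_families N k T. card (T \<union> (\<Union>t\<in>{1..k}. \<beta> t)) = n}.
      restrict (\<lambda>t. card (\<beta> t)) {1..k} = l}"
    using \<beta> sizes_eq[of \<beta>] by (simp add: nonempty_disjoint_families_def)
qed

lemma sum_nonempty_disjoint_families_by_sizes:
  assumes T: "finite T" "card T = m" and "m \<le> n"
  shows "(\<Sum>\<beta>\<in>{\<beta>\<in>nonempty_disjoint_families N k T. card (T \<union> (\<Union>t\<in>{1..k}. \<beta> t)) = n}. F \<beta>)
       = (\<Sum>l\<in>compositions k (n - m). \<Sum>\<beta>\<in>disjoint_families_of_sizes N T k l. F \<beta>)"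
proof -
  let ?E = "{\<beta>\<in>nonempty_disjoint_families N k T. card (T \<union> (\<Union>t\<in>{1..k}. \<beta> t)) = n}"
  have "(\<Sum>\<beta>\<in>?E. F \<beta>) = (\<Sum>l\<in>compositions k (n - m).
           \<Sum>\<beta>\<in>{\<beta>\<in>?E. restrict (\<lambda>t. card (\<beta> t)) {1..k} = l}. F \<beta>)"
  proof (rule sum.group[symmetric])
    show "(\<lambda>\<beta>. restrict (\<lambda>t. card (\<beta> t)) {1..k}) ` ?E \<subseteq> compositions k (n - m)"
      using sizes_in_compositions[OF T] by blast
  qed (simp_all add: finite_nonempty_disjoint_families finite_compositions)
  also have "\<dots> = (\<Sum>l\<in>compositions k (n - m). \<Sum>\<beta>\<in>disjoint_families_of_sizes N T k l. F \<beta>)"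
    using nonempty_disjoint_families_with_sizes[OF T \<open>m \<le> n\<close>] by simp
  finally show ?thesis .
qed

section \<open>The sum H\<close>

definition ordered_partitions :: "nat \<Rightarrow> nat set \<Rightarrow> (nat \<Rightarrow> nat) \<Rightarrow> (nat \<Rightarrow> nat set) set" where
  "ordered_partitions k D l = {\<theta> \<in> {1..k} \<rightarrow>\<^sub>E Pow D.
      (\<Union>t\<in>{1..k}. \<theta> t) = D \<and> disjoint_family_on \<theta> {1..k} \<and> (\<forall>t\<in>{1..k}. card (\<theta> t) = l t)}"

lemma image_ordered_partition_in_disjoint_families_of_sizes:
  assumes \<theta>: "\<theta> \<in> ordered_partitions k D l" and j: "inj_on j D" "j ` D \<subseteq> {1..N} - T"
  shows "restrict (\<lambda>t. j ` \<theta> t) {1..k} \<in> disjoint_families_of_sizes N T k l"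
proof -
  have sub: "\<theta> t \<subseteq> D" if "t \<in> {1..k}" for t
    using \<theta> that by (auto simp: ordered_partitions_def)
  have "disjoint_family_on \<theta> {1..k}"
    using \<theta> by (simp add: ordered_partitions_def)
  then have "disjoint_family_on (\<lambda>t. j ` \<theta> t) {1..k}"
    by (rule disjoint_family_on_bisimulation) (simp add: inj_on_image_Int[OF j(1) sub sub, symmetric])
  moreover have "card (j ` \<theta> t) = l t" if "t \<in> {1..k}" for t
    using \<theta> that card_image[OF inj_on_subset[OF j(1) sub[OF that]]]
    by (simp add: ordered_partitions_def)
  moreover have "j ` \<theta> t \<subseteq> {1..N} - T" if "t \<in> {1..k}" for t
    using sub[OF that] j(2) by blast
  ultimately show ?thesis
    by (auto simp: disjoint_families_of_sizes_def disjoint_family_on_def)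
qed

lemma preimage_family_in_ordered_partitions:
  assumes \<beta>: "\<beta> \<in> disjoint_families_of_sizes N T k l" "(\<Union>t\<in>{1..k}. \<beta> t) = j ` D"
    and j: "inj_on j D"
  shows "restrict (\<lambda>t. {i\<in>D. j i \<in> \<beta> t}) {1..k} \<in> ordered_partitions k D l"
proof -
  have "j ` {i\<in>D. j i \<in> \<beta> t} = \<beta> t" if "t \<in> {1..k}" for t
    using \<beta>(2) that by auto
  then have "card {i\<in>D. j i \<in> \<beta> t} = l t" if "t \<in> {1..k}" for t
    using \<beta>(1) that card_image[OF inj_on_subset[OF j, of "{i\<in>D. j i \<in> \<beta> t}"]]
    by (auto simp: disjoint_families_of_sizes_def)
  moreover have "(\<Union>t\<in>{1..k}. {i\<in>D. j i \<in> \<beta> t}) = D"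
    using \<beta>(2) by blast
  moreover have "disjoint_family_on \<beta> {1..k}"
    using \<beta>(1) by (simp add: disjoint_families_of_sizes_def)
  then have "disjoint_family_on (\<lambda>t. {i\<in>D. j i \<in> \<beta> t}) {1..k}"
    by (rule disjoint_family_on_bisimulation) blast
  ultimately show ?thesis
    by (auto simp: ordered_partitions_def disjoint_family_on_def)
qed

lemma sum_ordered_partitions_eq_sum_disjoint_families:
  fixes y :: "nat \<Rightarrow> nat \<Rightarrow> 'a::comm_ring_1"
  assumes j: "inj_on j D" "j ` D \<subseteq> {1..N} - T"
  shows "(\<Sum>\<theta>\<in>ordered_partitions k D l. \<Prod>t\<in>{1..k}. \<Prod>i\<in>\<theta> t. y t (j i))
       = (\<Sum>\<beta>\<in>{\<beta>\<in>disjoint_families_of_sizes N T k l. (\<Union>t\<in>{1..k}. \<beta> t) = j ` D}.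
            family_monomial k y \<beta>)"
proof (rule sum.reindex_bij_witness[where j="\<lambda>\<theta>. restrict (\<lambda>t. j ` \<theta> t) {1..k}"
      and i="\<lambda>\<beta>. restrict (\<lambda>t. {i\<in>D. j i \<in> \<beta> t}) {1..k}"])
  fix \<theta> assume \<theta>: "\<theta> \<in> ordered_partitions k D l"
  have sub: "\<theta> t \<subseteq> D" if "t \<in> {1..k}" for t
    using \<theta> that by (auto simp: ordered_partitions_def)
  have "{i\<in>D. j i \<in> j ` \<theta> t} = \<theta> t" if "t \<in> {1..k}" for t
    using sub[OF that] inj_on_image_mem_iff[OF j(1)] by blast
  then have "restrict (\<lambda>t. {i\<in>D. j i \<in> restrict (\<lambda>t. j ` \<theta> t) {1..k} t}) {1..k} = restrict \<theta> {1..k}"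
    by (intro restrict_ext) simp
  also have "\<dots> = \<theta>"
    using \<theta> by (simp add: ordered_partitions_def PiE_iff extensional_restrict)
  finally show "restrict (\<lambda>t. {i\<in>D. j i \<in> restrict (\<lambda>t. j ` \<theta> t) {1..k} t}) {1..k} = \<theta>" .
  have "(\<Union>t\<in>{1..k}. j ` \<theta> t) = j ` D"
    using \<theta> by (auto simp: ordered_partitions_def)
  then show "restrict (\<lambda>t. j ` \<theta> t) {1..k}
      \<in> {\<beta>\<in>disjoint_families_of_sizes N T k l. (\<Union>t\<in>{1..k}. \<beta> t) = j ` D}"
    using image_ordered_partition_in_disjoint_families_of_sizes[OF \<theta> j] by simp
  have reindexed: "(\<Prod>u\<in>j ` \<theta> t. y t u) = (\<Prod>i\<in>\<theta> t. y t (j i))" if "t \<in> {1..k}" for t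
    using prod.reindex[OF inj_on_subset[OF j(1) sub[OF that]], of "y t"] by simp
  show "family_monomial k y (restrict (\<lambda>t. j ` \<theta> t) {1..k}) = (\<Prod>t\<in>{1..k}. \<Prod>i\<in>\<theta> t. y t (j i))"
    unfolding family_monomial_def by (rule prod.cong) (simp_all add: reindexed)
next
  fix \<beta> assume \<beta>: "\<beta> \<in> {\<beta>\<in>disjoint_families_of_sizes N T k l. (\<Union>t\<in>{1..k}. \<beta> t) = j ` D}"
  then have "\<beta> \<in> disjoint_families_of_sizes N T k l" "(\<Union>t\<in>{1..k}. \<beta> t) = j ` D"
    by simp_all
  then show "restrict (\<lambda>t. {i\<in>D. j i \<in> \<beta> t}) {1..k} \<in> ordered_partitions k D l"
    by (rule preimage_family_in_ordered_partitions[OF _ _ j(1)])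
  have "j ` {i\<in>D. j i \<in> \<beta> t} = \<beta> t" if "t \<in> {1..k}" for t
    using \<beta> that by auto
  then have "restrict (\<lambda>t. j ` restrict (\<lambda>t. {i\<in>D. j i \<in> \<beta> t}) {1..k} t) {1..k} = restrict \<beta> {1..k}"
    by (intro restrict_ext) simp
  also have "\<dots> = \<beta>"
    using \<beta> by (simp add: disjoint_families_of_sizes_def PiE_iff extensional_restrict)
  finally show "restrict (\<lambda>t. j ` restrict (\<lambda>t. {i\<in>D. j i \<in> \<beta> t}) {1..k} t) {1..k} = \<beta>" .
qed

lemma strict_mono_on_image_eq:
  fixes j1 j2 :: "nat \<Rightarrow> 'a::linorder"
  assumes mono: "strict_mono_on {1..L} j1" "strict_mono_on {1..L} j2"
    and image: "j1 ` {1..L} = j2 ` {1..L}" and i: "i \<in> {1..L}"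
  shows "j1 i = j2 i"
proof -
  define enum where "enum j = map (\<lambda>i. j (Suc i)) [0..<L]" for j :: "nat \<Rightarrow> 'a"
  have sorted: "sorted_wrt (<) (enum j)" if "strict_mono_on {1..L} j" for j
    using that by (auto simp: enum_def sorted_wrt_iff_nth_less strict_mono_on_def)
  have set_enum: "set (enum j) = j ` {1..L}" for j
    by (auto simp: enum_def image_iff Bex_def) (metis Suc_pred' atLeastAtMost_iff le_simps(3))
  have "enum j1 = enum j2"
    using strict_sorted_equal[OF sorted[OF mono(1)] sorted[OF mono(2)]] image by (simp add: set_enum)
  then have "enum j1 ! (i - 1) = enum j2 ! (i - 1)"
    by simp
  moreover have "i - 1 < L" "Suc (i - 1) = i"
    using i by auto
  ultimately show ?thesis
    by (simp add: enum_def)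
qed

lemma bij_betw_strict_mono_on_image:
  fixes X :: "nat set"
  assumes "finite X"
  shows "bij_betw (\<lambda>j. j ` {1..L}) {j \<in> {1..L} \<rightarrow>\<^sub>E X. strict_mono_on {1..L} j}
           {U. U \<subseteq> X \<and> card U = L}"
proof (rule bij_betwI')
  fix j1 j2 assume "j1 \<in> {j \<in> {1..L} \<rightarrow>\<^sub>E X. strict_mono_on {1..L} j}"
    and "j2 \<in> {j \<in> {1..L} \<rightarrow>\<^sub>E X. strict_mono_on {1..L} j}"
  then have "j1 = j2" if "j1 ` {1..L} = j2 ` {1..L}"
    using strict_mono_on_image_eq[of L j1 j2] that
    by (metis (no_types, lifting) PiE_arb mem_Collect_eq ext)
  then show "(j1 ` {1..L} = j2 ` {1..L}) = (j1 = j2)"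
    by blast
next
  fix j assume "j \<in> {j \<in> {1..L} \<rightarrow>\<^sub>E X. strict_mono_on {1..L} j}"
  then show "j ` {1..L} \<in> {U. U \<subseteq> X \<and> card U = L}"
    by (auto simp: card_image strict_mono_on_imp_inj_on)
next
  fix U assume U: "U \<in> {U. U \<subseteq> X \<and> card U = L}"
  define xs where "xs = sorted_list_of_set U"
  have "finite U"
    using U assms finite_subset by blast
  then have xs: "sorted_wrt (<) xs" "set xs = U" "length xs = L"
    using U by (simp_all add: xs_def)
  define j where "j i = (if i \<in> {1..L} then xs ! (i - 1) else undefined)" for i
  have image_j: "j ` {1..L} = U"
  proof
    show "j ` {1..L} \<subseteq> U"
      using xs by (auto simp: j_def)
    show "U \<subseteq> j ` {1..L}"
    proof
      fix u assume "u \<in> U"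
      then obtain q where "q < L" "u = xs ! q"
        using xs by (metis in_set_conv_nth)
      then show "u \<in> j ` {1..L}"
        by (auto simp: j_def image_iff intro!: bexI[of _ "Suc q"])
    qed
  qed
  have "strict_mono_on {1..L} j"
  proof (rule strict_mono_onI)
    fix r s assume "r \<in> {1..L}" "s \<in> {1..L}" "r < s"
    then show "j r < j s"
      using sorted_wrt_nth_less[OF xs(1), of "r - 1" "s - 1"] xs(3) by (simp add: j_def)
  qed
  moreover have "j \<in> {1..L} \<rightarrow>\<^sub>E X"
  proof (rule PiE_I)
    show "j i \<in> X" if "i \<in> {1..L}" for i
      using that image_j U by blast
    show "j i = undefined" if "i \<notin> {1..L}" for i
      using that unfolding j_def by presburger
  qed
  ultimately show "\<exists>j\<in>{j \<in> {1..L} \<rightarrow>\<^sub>E X. strict_mono_on {1..L} j}. U = j ` {1..L}"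
    using image_j by blast
qed

lemma H_sum_eq_sum_disjoint_families_of_sizes:
  fixes y :: "nat \<Rightarrow> nat \<Rightarrow> 'a::comm_ring_1"
  shows "H_sum N T k y l = (\<Sum>\<beta>\<in>disjoint_families_of_sizes N T k l. family_monomial k y \<beta>)"
proof -
  define L where "L = (\<Sum>t=1..k. l t)"
  define J where "J = {j \<in> {1..L} \<rightarrow>\<^sub>E ({1..N} - T). strict_mono_on {1..L} j}"
  define G where "G U = (\<Sum>\<beta>\<in>{\<beta>\<in>disjoint_families_of_sizes N T k l. (\<Union>t\<in>{1..k}. \<beta> t) = U}.
      family_monomial k y \<beta>)" for U
  have "H_sum N T k y l = (\<Sum>j\<in>J. \<Sum>\<theta>\<in>ordered_partitions k {1..L} l. \<Prod>t\<in>{1..k}. \<Prod>i\<in>\<theta> t. y t (j i))"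
    by (simp add: H_sum_def L_def J_def ordered_partitions_def disjoint_family_on_def)
  also have "\<dots> = (\<Sum>j\<in>J. G (j ` {1..L}))"
  proof (rule sum.cong[OF refl])
    fix j assume "j \<in> J"
    then have "inj_on j {1..L}" "j ` {1..L} \<subseteq> {1..N} - T"
      by (auto simp: J_def strict_mono_on_imp_inj_on)
    then show "(\<Sum>\<theta>\<in>ordered_partitions k {1..L} l. \<Prod>t\<in>{1..k}. \<Prod>i\<in>\<theta> t. y t (j i))
        = G (j ` {1..L})"
      unfolding G_def by (rule sum_ordered_partitions_eq_sum_disjoint_families)
  qed
  also have "\<dots> = (\<Sum>U\<in>{U. U \<subseteq> {1..N} - T \<and> card U = L}. G U)"
    unfolding J_def by (rule sum.reindex_bij_betw[OF bij_betw_strict_mono_on_image]) simp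
  also have "\<dots> = (\<Sum>\<beta>\<in>disjoint_families_of_sizes N T k l. family_monomial k y \<beta>)"
    unfolding G_def
  proof (rule sum.group)
    show "(\<lambda>\<beta>. \<Union>t\<in>{1..k}. \<beta> t) ` disjoint_families_of_sizes N T k l
        \<subseteq> {U. U \<subseteq> {1..N} - T \<and> card U = L}"
    proof clarify
      fix \<beta> assume \<beta>: "\<beta> \<in> disjoint_families_of_sizes N T k l"
      then have "card (\<Union>t\<in>{1..k}. \<beta> t) = L"
        using card_UN_disjoint'[of \<beta> "{1..k}"] finite_family_member[of \<beta> "{1..k}" N T]
        by (simp add: disjoint_families_of_sizes_def L_def)
      then show "(\<Union>t\<in>{1..k}. \<beta> t) \<subseteq> {1..N} - T \<and> card (\<Union>t\<in>{1..k}. \<beta> t) = L"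
        using \<beta> by (auto simp: disjoint_families_of_sizes_def)
    qed
  qed (simp_all add: finite_disjoint_families_of_sizes)
  finally show ?thesis .
qed

section \<open>The sum S\<close>

lemma restrict_eq_extensional_iff:
  assumes "g \<in> extensional A"
  shows "restrict f A = g \<longleftrightarrow> (\<forall>x\<in>A. f x = g x)"
proof
  assume "\<forall>x\<in>A. f x = g x"
  then have "restrict f A = restrict g A"
    by (intro restrict_ext) simp
  also have "\<dots> = g"
    using assms by (rule extensional_restrict)
  finally show "restrict f A = g" .
qed auto

lemma card_inj_funcset_eq_card:
  assumes "finite A" "finite B" "card A = card B"
  shows "card {\<sigma> \<in> A \<rightarrow>\<^sub>E B. inj_on \<sigma> A} = fact (card A)"
  using card_inj_on_subset_funcset[OF assms(1,2) subset_refl] assms(3)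
  by (simp add: fact_prod_rev)

definition glue_blocks :: "'i set \<Rightarrow> ('i \<Rightarrow> 'a set) \<Rightarrow> ('i \<Rightarrow> 'a \<Rightarrow> 'b) \<Rightarrow> 'a \<Rightarrow> 'b" where
  "glue_blocks I B \<sigma> i =
     (if i \<in> (\<Union>t\<in>I. B t) then \<sigma> (THE t. t \<in> I \<and> i \<in> B t) i else undefined)"

lemma glue_blocks_apply:
  assumes "disjoint_family_on B I" "t \<in> I" "i \<in> B t"
  shows "glue_blocks I B \<sigma> i = \<sigma> t i"
proof -
  have "(THE s. s \<in> I \<and> i \<in> B s) = t"
    using assms by (auto simp: disjoint_family_on_def)
  then show ?thesis
    using assms(2,3) by (auto simp: glue_blocks_def)
qed

lemma glue_blocks_outside: "i \<notin> (\<Union>t\<in>I. B t) \<Longrightarrow> glue_blocks I B \<sigma> i = undefined"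
  by (simp add: glue_blocks_def)

lemma glue_blocks_image:
  assumes B: "disjoint_family_on B I" and t: "t \<in> I"
    and \<sigma>: "\<sigma> t \<in> B t \<rightarrow>\<^sub>E C t" "inj_on (\<sigma> t) (B t)" and card: "finite (C t)" "card (B t) = card (C t)"
  shows "glue_blocks I B \<sigma> ` B t = C t"
proof -
  have "glue_blocks I B \<sigma> ` B t = \<sigma> t ` B t"
    by (rule image_cong[OF refl], rule glue_blocks_apply[OF B t])
  also have "\<dots> = C t"
    using \<sigma> card card_image[OF \<sigma>(2)] by (intro card_subset_eq) auto
  finally show ?thesis .
qed

lemma inj_on_glue_blocks:
  assumes B: "disjoint_family_on B I" and C: "disjoint_family_on C I"
    and \<sigma>: "\<And>t. t \<in> I \<Longrightarrow> \<sigma> t \<in> B t \<rightarrow>\<^sub>E C t \<and> inj_on (\<sigma> t) (B t)"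
  shows "inj_on (glue_blocks I B \<sigma>) (\<Union>t\<in>I. B t)"
proof (rule inj_onI, elim UN_E)
  fix i i' t t' assume i: "t \<in> I" "i \<in> B t" and i': "t' \<in> I" "i' \<in> B t'"
    and eq: "glue_blocks I B \<sigma> i = glue_blocks I B \<sigma> i'"
  have eq': "\<sigma> t i = \<sigma> t' i'"
    using eq by (simp only: glue_blocks_apply[OF B i] glue_blocks_apply[OF B i'])
  have mem_C: "\<sigma> t i \<in> C t" "\<sigma> t' i' \<in> C t'"
    using \<sigma> i i' by (blast dest: PiE_mem)+
  have "t = t'"
  proof (rule ccontr)
    assume "t \<noteq> t'"
    then have "C t \<inter> C t' = {}"
      by (rule disjoint_family_onD[OF C i(1) i'(1)])
    then show False
      using mem_C eq' by auto
  qed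
  with eq' i'(2) have "\<sigma> t i = \<sigma> t i'" "i' \<in> B t"
    by simp_all
  then show "i = i'"
    by (rule inj_onD[OF conjunct2[OF \<sigma>[OF i(1)]] _ i(2)])
qed

lemma bij_betw_inj_on_with_block_images:
  fixes B :: "'i \<Rightarrow> 'a set" and C :: "'i \<Rightarrow> 'b set"
  assumes B: "disjoint_family_on B I" and C: "disjoint_family_on C I"
    and card: "\<And>t. t \<in> I \<Longrightarrow> finite (C t) \<and> card (B t) = card (C t)"
    and Y: "\<And>t. t \<in> I \<Longrightarrow> C t \<subseteq> Y"
  shows "bij_betw (\<lambda>\<rho>. restrict (\<lambda>t. restrict \<rho> (B t)) I)
     {\<rho> \<in> (\<Union>t\<in>I. B t) \<rightarrow>\<^sub>E Y. inj_on \<rho> (\<Union>t\<in>I. B t) \<and> (\<forall>t\<in>I. \<rho> ` B t = C t)}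
     (\<Pi>\<^sub>E t\<in>I. {\<sigma> \<in> B t \<rightarrow>\<^sub>E C t. inj_on \<sigma> (B t)})"
proof (rule bij_betwI[where g="glue_blocks I B"])
  let ?D = "\<Union>t\<in>I. B t"
  show "(\<lambda>\<rho>. restrict (\<lambda>t. restrict \<rho> (B t)) I)
      \<in> {\<rho> \<in> ?D \<rightarrow>\<^sub>E Y. inj_on \<rho> ?D \<and> (\<forall>t\<in>I. \<rho> ` B t = C t)}
        \<rightarrow> (\<Pi>\<^sub>E t\<in>I. {\<sigma> \<in> B t \<rightarrow>\<^sub>E C t. inj_on \<sigma> (B t)})"
  proof (intro Pi_I PiE_I)
    fix \<rho> t assume \<rho>: "\<rho> \<in> {\<rho> \<in> ?D \<rightarrow>\<^sub>E Y. inj_on \<rho> ?D \<and> (\<forall>t\<in>I. \<rho> ` B t = C t)}" and t: "t \<in> I"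
    then have "\<rho> ` B t = C t" "inj_on \<rho> (B t)"
      by (auto intro: inj_on_subset)
    then show "restrict (\<lambda>t. restrict \<rho> (B t)) I t \<in> {\<sigma> \<in> B t \<rightarrow>\<^sub>E C t. inj_on \<sigma> (B t)}"
      using t by (auto simp: inj_on_def)
  qed simp
  show "glue_blocks I B \<in> (\<Pi>\<^sub>E t\<in>I. {\<sigma> \<in> B t \<rightarrow>\<^sub>E C t. inj_on \<sigma> (B t)})
      \<rightarrow> {\<rho> \<in> ?D \<rightarrow>\<^sub>E Y. inj_on \<rho> ?D \<and> (\<forall>t\<in>I. \<rho> ` B t = C t)}"
  proof
    fix \<sigma> assume "\<sigma> \<in> (\<Pi>\<^sub>E t\<in>I. {\<sigma> \<in> B t \<rightarrow>\<^sub>E C t. inj_on \<sigma> (B t)})"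
    then have \<sigma>: "\<And>t. t \<in> I \<Longrightarrow> \<sigma> t \<in> B t \<rightarrow>\<^sub>E C t \<and> inj_on (\<sigma> t) (B t)"
      by (simp add: PiE_iff)
    have image: "glue_blocks I B \<sigma> ` B t = C t" if "t \<in> I" for t
      using glue_blocks_image[OF B that] \<sigma>[OF that] card[OF that] by blast
    have "glue_blocks I B \<sigma> \<in> ?D \<rightarrow>\<^sub>E Y"
    proof (rule PiE_I)
      fix i assume "i \<in> ?D"
      then obtain t where "t \<in> I" "i \<in> B t"
        by blast
      then show "glue_blocks I B \<sigma> i \<in> Y"
        using image Y by blast
    qed (rule glue_blocks_outside)
    then show "glue_blocks I B \<sigma> \<in> {\<rho> \<in> ?D \<rightarrow>\<^sub>E Y. inj_on \<rho> ?D \<and> (\<forall>t\<in>I. \<rho> ` B t = C t)}"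
      using inj_on_glue_blocks[OF B C \<sigma>] image by blast
  qed
  fix \<rho> assume \<rho>: "\<rho> \<in> {\<rho> \<in> ?D \<rightarrow>\<^sub>E Y. inj_on \<rho> ?D \<and> (\<forall>t\<in>I. \<rho> ` B t = C t)}"
  show "glue_blocks I B (restrict (\<lambda>t. restrict \<rho> (B t)) I) = \<rho>"
  proof
    fix i
    show "glue_blocks I B (restrict (\<lambda>t. restrict \<rho> (B t)) I) i = \<rho> i"
    proof (cases "i \<in> ?D")
      case True
      then obtain t where "t \<in> I" "i \<in> B t"
        by blast
      then show ?thesis
        by (simp add: glue_blocks_apply[OF B])
    next
      case False
      have "\<rho> \<in> ?D \<rightarrow>\<^sub>E Y"
        using \<rho> by simp
      then have "\<rho> i = undefined"
        using False by (rule PiE_arb)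
      then show ?thesis
        by (simp only: glue_blocks_outside[OF False])
    qed
  qed
next
  fix \<sigma> assume \<sigma>: "\<sigma> \<in> (\<Pi>\<^sub>E t\<in>I. {\<sigma> \<in> B t \<rightarrow>\<^sub>E C t. inj_on \<sigma> (B t)})"
  have "restrict (glue_blocks I B \<sigma>) (B t) = \<sigma> t" if "t \<in> I" for t
  proof -
    have "restrict (glue_blocks I B \<sigma>) (B t) = restrict (\<sigma> t) (B t)"
      by (rule restrict_ext) (rule glue_blocks_apply[OF B that])
    also have "\<dots> = \<sigma> t"
      using PiE_mem[OF \<sigma> that] by (simp add: PiE_iff extensional_restrict)
    finally show ?thesis .
  qed
  then have "restrict (\<lambda>t. restrict (glue_blocks I B \<sigma>) (B t)) I = restrict \<sigma> I"
    by (rule restrict_ext)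
  also have "\<dots> = \<sigma>"
    using \<sigma> by (simp add: PiE_iff extensional_restrict)
  finally show "restrict (\<lambda>t. restrict (glue_blocks I B \<sigma>) (B t)) I = \<sigma>" .
qed

lemma card_inj_on_with_block_images:
  fixes B :: "'i \<Rightarrow> 'a set" and C :: "'i \<Rightarrow> 'b set"
  assumes "finite I" "disjoint_family_on B I" "disjoint_family_on C I"
    and "\<And>t. t \<in> I \<Longrightarrow> finite (B t) \<and> finite (C t) \<and> card (B t) = card (C t)"
    and "\<And>t. t \<in> I \<Longrightarrow> C t \<subseteq> Y"
  shows "card {\<rho> \<in> (\<Union>t\<in>I. B t) \<rightarrow>\<^sub>E Y. inj_on \<rho> (\<Union>t\<in>I. B t) \<and> (\<forall>t\<in>I. \<rho> ` B t = C t)}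
       = (\<Prod>t\<in>I. fact (card (B t)))"
proof -
  have card': "\<And>t. t \<in> I \<Longrightarrow> finite (C t) \<and> card (B t) = card (C t)"
    using assms(4) by simp
  have "card {\<rho> \<in> (\<Union>t\<in>I. B t) \<rightarrow>\<^sub>E Y. inj_on \<rho> (\<Union>t\<in>I. B t) \<and> (\<forall>t\<in>I. \<rho> ` B t = C t)}
      = card (\<Pi>\<^sub>E t\<in>I. {\<sigma> \<in> B t \<rightarrow>\<^sub>E C t. inj_on \<sigma> (B t)})"
    by (rule bij_betw_same_card[OF bij_betw_inj_on_with_block_images[OF assms(2,3) card' assms(5)]])
  also have "\<dots> = (\<Prod>t\<in>I. fact (card (B t)))"
    using assms(1,4) by (simp add: card_PiE card_inj_funcset_eq_card)
  finally show ?thesis .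
qed

definition block :: "(nat \<Rightarrow> nat) \<Rightarrow> nat \<Rightarrow> nat set" where
  "block l t = {(\<Sum>s=1..t-1. l s)<..(\<Sum>s=1..t. l s)}"

lemma sum_atLeastAtMost_pred:
  fixes t :: nat
  shows "1 \<le> t \<Longrightarrow> (\<Sum>s=1..t. l s) = (\<Sum>s=1..t-1. l s) + (l t :: nat)"
  by (cases t) (simp_all add: sum.cl_ivl_Suc)

lemma card_block: "1 \<le> t \<Longrightarrow> card (block l t) = l t"
  using sum_atLeastAtMost_pred[of t l] by (simp add: block_def)

lemma block_of_eq:
  assumes "1 \<le> t" "i \<in> block l t"
  shows "block_of l i = t"
  unfolding block_of_def
proof (rule Least_equality)
  show "i \<le> (\<Sum>s=1..t. l s)"
    using assms(2) by (simp add: block_def)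
  show "t \<le> t'" if "i \<le> (\<Sum>s=1..t'. l s)" for t'
  proof (rule ccontr)
    assume "\<not> t \<le> t'"
    then have "(\<Sum>s=1..t'. l s) \<le> (\<Sum>s=1..t-1. l s)"
      by (intro sum_mono2) auto
    then show False
      using that assms(2) by (simp add: block_def)
  qed
qed

lemma block_of_mem_block:
  assumes "i \<in> {1..(\<Sum>s=1..k. l s)}"
  shows "block_of l i \<in> {1..k}" and "i \<in> block l (block_of l i)"
proof -
  have bound: "i \<le> (\<Sum>s=1..k. l s)"
    using assms by simp
  have le_k: "block_of l i \<le> k"
    unfolding block_of_def by (rule Least_le) (rule bound)
  have upper: "i \<le> (\<Sum>s=1..block_of l i. l s)"
    unfolding block_of_def by (rule LeastI) (rule bound)
  then have pos: "block_of l i \<noteq> 0"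
    using assms by (cases "block_of l i") auto
  have "\<not> i \<le> (\<Sum>s=1..block_of l i - 1. l s)"
    unfolding block_of_def by (rule not_less_Least) (use pos in \<open>simp add: block_of_def\<close>)
  then show "i \<in> block l (block_of l i)"
    using upper by (simp add: block_def)
  show "block_of l i \<in> {1..k}"
    using le_k pos by simp
qed

lemma disjoint_family_on_block: "disjoint_family_on (block l) {1..k}"
  unfolding disjoint_family_on_def by (metis atLeastAtMost_iff block_of_eq disjoint_iff)

lemma UN_block: "(\<Union>t\<in>{1..k}. block l t) = {1..(\<Sum>s=1..k. l s)}"
proof
  show "(\<Union>t\<in>{1..k}. block l t) \<subseteq> {1..(\<Sum>s=1..k. l s)}"
  proof clarify
    fix t i assume "t \<in> {1..k}" "i \<in> block l t"
    moreover have "(\<Sum>s=1..t. l s) \<le> (\<Sum>s=1..k. l s)"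
      using \<open>t \<in> {1..k}\<close> by (intro sum_mono2) auto
    ultimately show "i \<in> {1..(\<Sum>s=1..k. l s)}"
      by (auto simp: block_def)
  qed
  show "{1..(\<Sum>s=1..k. l s)} \<subseteq> (\<Union>t\<in>{1..k}. block l t)"
    using block_of_mem_block by blast
qed

lemma block_subset: "t \<in> {1..k} \<Longrightarrow> block l t \<subseteq> {1..(\<Sum>s=1..k. l s)}"
  using UN_block by blast

definition block_images :: "(nat \<Rightarrow> nat) \<Rightarrow> nat \<Rightarrow> (nat \<Rightarrow> nat) \<Rightarrow> nat \<Rightarrow> nat set" where
  "block_images l k \<rho> = restrict (\<lambda>t. \<rho> ` block l t) {1..k}"

lemma prod_rows_eq_family_monomial:
  assumes \<rho>: "inj_on \<rho> {1..(\<Sum>s=1..k. l s)}"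
  shows "(\<Prod>i\<in>{1..(\<Sum>s=1..k. l s)}. y (block_of l i) (\<rho> i)) = family_monomial k y (block_images l k \<rho>)"
proof -
  have "(\<Prod>i\<in>{1..(\<Sum>s=1..k. l s)}. y (block_of l i) (\<rho> i))
      = (\<Prod>t\<in>{1..k}. \<Prod>i\<in>block l t. y (block_of l i) (\<rho> i))"
    unfolding UN_block[symmetric]
    by (rule prod.UNION_disjoint[OF _ _ disjoint_family_on_block[unfolded disjoint_family_on_def]])
       (simp_all add: block_def)
  also have "\<dots> = (\<Prod>t\<in>{1..k}. \<Prod>u\<in>\<rho> ` block l t. y t u)"
  proof (rule prod.cong[OF refl])
    fix t assume t: "t \<in> {1..k}"
    have "inj_on \<rho> (block l t)"
      using inj_on_subset[OF \<rho> block_subset[OF t]] .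
    moreover have "block_of l i = t" if "i \<in> block l t" for i
      using block_of_eq[OF _ that] t by simp
    then have "(\<Prod>i\<in>block l t. y (block_of l i) (\<rho> i)) = (\<Prod>i\<in>block l t. y t (\<rho> i))"
      by (intro prod.cong refl) simp
    ultimately show "(\<Prod>i\<in>block l t. y (block_of l i) (\<rho> i)) = (\<Prod>u\<in>\<rho> ` block l t. y t u)"
      by (simp add: prod.reindex)
  qed
  finally show ?thesis
    by (simp add: family_monomial_def block_images_def)
qed

lemma block_images_in_disjoint_families_of_sizes:
  assumes \<rho>: "\<rho> \<in> {1..(\<Sum>s=1..k. l s)} \<rightarrow>\<^sub>E ({1..N} - T)" "inj_on \<rho> {1..(\<Sum>s=1..k. l s)}"
  shows "block_images l k \<rho> \<in> disjoint_families_of_sizes N T k l"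
proof -
  have "\<rho> ` block l t \<subseteq> {1..N} - T" if "t \<in> {1..k}" for t
    using block_subset[OF that] PiE_mem[OF \<rho>(1)] by blast
  moreover have "card (\<rho> ` block l t) = l t" if "t \<in> {1..k}" for t
    using card_image[OF inj_on_subset[OF \<rho>(2) block_subset[OF that]]] card_block[of t l] that by simp
  moreover have "disjoint_family_on (\<lambda>t. \<rho> ` block l t) {1..k}"
    using disjoint_family_on_block
    by (rule disjoint_family_on_bisimulation)
       (simp add: inj_on_image_Int[OF \<rho>(2) block_subset block_subset, symmetric])
  ultimately show ?thesis
    by (auto simp: disjoint_families_of_sizes_def block_images_def disjoint_family_on_def)
qed

lemma card_block_images_fibre:
  assumes \<beta>: "\<beta> \<in> disjoint_families_of_sizes N T k l"
  shows "card {\<rho> \<in> {1..(\<Sum>s=1..k. l s)} \<rightarrow>\<^sub>E ({1..N} - T).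
                inj_on \<rho> {1..(\<Sum>s=1..k. l s)} \<and> block_images l k \<rho> = \<beta>}
       = (\<Prod>t=1..k. fact (l t))"
proof -
  have \<beta>': "\<beta> \<in> {1..k} \<rightarrow>\<^sub>E Pow ({1..N} - T)" "disjoint_family_on \<beta> {1..k}"
    "\<And>t. t \<in> {1..k} \<Longrightarrow> card (\<beta> t) = l t"
    using \<beta> by (simp_all add: disjoint_families_of_sizes_def)
  have "block_images l k \<rho> = \<beta> \<longleftrightarrow> (\<forall>t\<in>{1..k}. \<rho> ` block l t = \<beta> t)" for \<rho>
    unfolding block_images_def
    by (rule restrict_eq_extensional_iff) (use \<beta>'(1) in \<open>simp add: PiE_iff\<close>)
  then have "card {\<rho> \<in> {1..(\<Sum>s=1..k. l s)} \<rightarrow>\<^sub>E ({1..N} - T).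
                inj_on \<rho> {1..(\<Sum>s=1..k. l s)} \<and> block_images l k \<rho> = \<beta>}
      = card {\<rho> \<in> (\<Union>t\<in>{1..k}. block l t) \<rightarrow>\<^sub>E ({1..N} - T).
                inj_on \<rho> (\<Union>t\<in>{1..k}. block l t) \<and> (\<forall>t\<in>{1..k}. \<rho> ` block l t = \<beta> t)}"
    unfolding UN_block by simp
  also have "\<dots> = (\<Prod>t=1..k. fact (card (block l t)))"
  proof (rule card_inj_on_with_block_images)
    show "finite (block l t) \<and> finite (\<beta> t) \<and> card (block l t) = card (\<beta> t)" if "t \<in> {1..k}" for t
      using that finite_family_member[OF \<beta>'(1) that] \<beta>'(3)[OF that] card_block[of t l]
      by (simp add: block_def)
    show "\<beta> t \<subseteq> {1..N} - T" if "t \<in> {1..k}" for t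
      using PiE_mem[OF \<beta>'(1) that] by simp
  qed (rule finite_atLeastAtMost disjoint_family_on_block \<beta>'(2))+
  also have "\<dots> = (\<Prod>t=1..k. fact (l t))"
  proof (rule prod.cong[OF refl])
    fix t assume "t \<in> {1..k}"
    then show "fact (card (block l t)) = fact (l t)"
      using card_block[of t l] by simp
  qed
  finally show ?thesis .
qed

lemma S_sum_eq_sum_disjoint_families_of_sizes:
  fixes y :: "nat \<Rightarrow> nat \<Rightarrow> 'a::comm_ring_1"
  shows "S_sum N T k y l
       = of_nat (\<Prod>t=1..k. fact (l t)) * (\<Sum>\<beta>\<in>disjoint_families_of_sizes N T k l. family_monomial k y \<beta>)"
proof -
  define L where "L = (\<Sum>t=1..k. l t)"
  define R where "R = {\<rho> \<in> {1..L} \<rightarrow>\<^sub>E ({1..N} - T). inj_on \<rho> {1..L}}"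
  have "R \<subseteq> {1..L} \<rightarrow>\<^sub>E ({1..N} - T)"
    by (auto simp: R_def)
  then have "finite R"
    by (rule finite_subset) (simp add: finite_PiE)
  have "S_sum N T k y l = (\<Sum>\<rho>\<in>R. \<Prod>i\<in>{1..L}. y (block_of l i) (\<rho> i))"
    by (simp add: S_sum_def L_def R_def)
  also have "\<dots> = (\<Sum>\<rho>\<in>R. family_monomial k y (block_images l k \<rho>))"
  proof (rule sum.cong[OF refl])
    fix \<rho> assume "\<rho> \<in> R"
    then have "inj_on \<rho> {1..L}"
      by (simp add: R_def)
    then show "(\<Prod>i\<in>{1..L}. y (block_of l i) (\<rho> i)) = family_monomial k y (block_images l k \<rho>)"
      unfolding L_def by (rule prod_rows_eq_family_monomial)
  qed
  also have "\<dots> = (\<Sum>\<beta>\<in>disjoint_families_of_sizes N T k l.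
                       \<Sum>\<rho>\<in>{\<rho>\<in>R. block_images l k \<rho> = \<beta>}. family_monomial k y (block_images l k \<rho>))"
  proof (rule sum.group[symmetric])
    show "block_images l k ` R \<subseteq> disjoint_families_of_sizes N T k l"
      using block_images_in_disjoint_families_of_sizes by (auto simp: R_def L_def)
  qed (simp_all add: \<open>finite R\<close> finite_disjoint_families_of_sizes)
  also have "\<dots> = (\<Sum>\<beta>\<in>disjoint_families_of_sizes N T k l.
                       of_nat (\<Prod>t=1..k. fact (l t)) * family_monomial k y \<beta>)"
  proof (rule sum.cong[OF refl])
    fix \<beta> assume \<beta>: "\<beta> \<in> disjoint_families_of_sizes N T k l"
    have "(\<Sum>\<rho>\<in>{\<rho>\<in>R. block_images l k \<rho> = \<beta>}. family_monomial k y (block_images l k \<rho>))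
        = of_nat (card {\<rho>\<in>R. block_images l k \<rho> = \<beta>}) * family_monomial k y \<beta>"
      by simp
    also have "card {\<rho>\<in>R. block_images l k \<rho> = \<beta>} = (\<Prod>t=1..k. fact (l t))"
      using card_block_images_fibre[OF \<beta>] by (simp add: R_def L_def conj_assoc)
    finally show "(\<Sum>\<rho>\<in>{\<rho>\<in>R. block_images l k \<rho> = \<beta>}. family_monomial k y (block_images l k \<rho>))
        = of_nat (\<Prod>t=1..k. fact (l t)) * family_monomial k y \<beta>" .
  qed
  finally show ?thesis
    by (simp add: sum_distrib_left)
qed

lemma composition_part_bound:
  assumes l: "l \<in> compositions k M" and t: "t \<in> {1..k}"
  shows "l t + (k - 1) \<le> M"
proof -
  have parts: "l \<in> {1..k} \<rightarrow>\<^sub>E {1..M}" "(\<Sum>s=1..k. l s) = M"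
    using l by (simp_all add: compositions_def)
  have "k - 1 = (\<Sum>s\<in>{1..k} - {t}. 1)"
    using t by simp
  also have "\<dots> \<le> (\<Sum>s\<in>{1..k} - {t}. l s)"
    by (rule sum_mono) (use PiE_mem[OF parts(1)] in force)
  finally have "l t + (k - 1) \<le> l t + (\<Sum>s\<in>{1..k} - {t}. l s)"
    by simp
  also have "\<dots> = M"
    using t parts(2) by (simp add: sum.remove)
  finally show ?thesis .
qed

lemma of_nat_prod_fact_composition_neq_zero:
  assumes l: "l \<in> compositions k M" and small: "M + 1 < k + CARD('p)"
  shows "(of_nat (\<Prod>t=1..k. fact (l t)) :: 'p::prime_card mod_ring) \<noteq> 0"
proof
  assume "(of_nat (\<Prod>t=1..k. fact (l t)) :: 'p mod_ring) = 0"
  then have "CARD('p) dvd (\<Prod>t=1..k. fact (l t))"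
    by (rule of_nat_0_mod_ring_dvd)
  then obtain t where t: "t \<in> {1..k}" and "CARD('p) dvd fact (l t)"
    using prime_dvd_prod_iff[OF _ prime_card[where 'a='p], of "{1..k}"] by auto
  then have "CARD('p) \<le> l t"
    using prime_dvd_fact_iff[OF prime_card[where 'a='p]] by auto
  then show False
    using composition_part_bound[OF l t] small t by simp
qed

theorem corollary2p3:
  fixes y :: "nat \<Rightarrow> nat \<Rightarrow> 'p::prime_card mod_ring"
    and k n N m :: nat and j :: "nat \<Rightarrow> nat"
  assumes "1 \<le> k" and "k \<le> n" and "n \<le> N"
    and "m \<le> n - k"
    and "strict_mono_on {1..m} j" and "j ` {1..m} \<subseteq> {1..N}"
  shows "multilin_coeff N (iter_deriv (elem_sym N n) (map y [1..<k+1])) (j ` {1..m})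
           = (\<Sum>l\<in>compositions k (n - m). H_sum N (j ` {1..m}) k y l)
       \<and> (k + m + CARD('p) > n + 1 \<longrightarrow>
           multilin_coeff N (iter_deriv (elem_sym N n) (map y [1..<k+1])) (j ` {1..m})
           = (\<Sum>l\<in>compositions k (n - m).
                inverse (of_nat (\<Prod>t=1..k. fact (l t))) * S_sum N (j ` {1..m}) k y l))"
proof -
  let ?T = "j ` {1..m}"
  have finite_T: "finite ?T" and card_T: "card ?T = m"
    using card_image[OF strict_mono_on_imp_inj_on[OF assms(5)]] by simp_all
  have coeff: "multilin_coeff N (iter_deriv (elem_sym N n) (map y [1..<k+1])) ?T
      = (\<Sum>l\<in>compositions k (n - m). \<Sum>\<beta>\<in>disjoint_families_of_sizes N ?T k l. family_monomial k y \<beta>)"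
    using assms(4)
    by (intro trans[OF multilin_coeff_iter_deriv_elem_sym[OF assms(6)]]
        sum_nonempty_disjoint_families_by_sizes[OF finite_T card_T]) simp
  show ?thesis
  proof (intro conjI impI)
    show "multilin_coeff N (iter_deriv (elem_sym N n) (map y [1..<k+1])) ?T
        = (\<Sum>l\<in>compositions k (n - m). H_sum N ?T k y l)"
      unfolding coeff by (simp add: H_sum_eq_sum_disjoint_families_of_sizes)
    assume "k + m + CARD('p) > n + 1"
    then have "(of_nat (\<Prod>t=1..k. fact (l t)) :: 'p mod_ring) \<noteq> 0"
      if "l \<in> compositions k (n - m)" for l
      using that assms(4) by (intro of_nat_prod_fact_composition_neq_zero) auto
    then show "multilin_coeff N (iter_deriv (elem_sym N n) (map y [1..<k+1])) ?T
        = (\<Sum>l\<in>compositions k (n - m).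
             inverse (of_nat (\<Prod>t=1..k. fact (l t))) * S_sum N ?T k y l)"
      unfolding coeff by (intro sum.cong refl) (simp add: S_sum_eq_sum_disjoint_families_of_sizes)
  qed
qed

end
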